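(* Let $m$ be an integer with $m\ge 1$ or $m\le -2$, let $T_j(z,w)=w^jS_j(z/w)$, let \[F=\left[(xyw-u^2z)w^{2m}+(xyzw+4u^2w^2-x^2w^2-y^2w^2-u^2z^2)T_mT_{m-1}\right]T_{m-1}-u^2w^{2m}T_m,\] let $S=\{F=0\}\subset\mathbb P^2(x:y:u)\times\mathbb P^1(z:w)$ and $\phi:S\to\mathbb P^1$, $(x:y:u,z:w)\mapsto(z:w)$. The degenerate fibers of $\phi$ (those over points $(z:w)$ for which $F=F_x=F_y=F_u=0$ has a solution $(x:y:u)\in\mathbb P^2$) are exactly: $\phi^{-1}(1:0)=\{(x:y:u)\mid u^2=0\}$; $\phi^{-1}(z:1)=\{(x:y:u)\mid u^2=0\}$ where $z$ is a root of $S_{m-1}(z)$; $\phi^{-1}(z:1)=\{(x:y:u)\mid (xS_m(z)-yS_{m-1}(z))(yS_m(z)-xS_{m-1}(z))=0\}$ where $z$ is a root of $S_{3m}(z)$; $\phi^{-1}(z:1)=\{(x:y:u)\mid (x-y)^2-(2-z)u^2=0\}$ where $z$ is a root of $S_m(z)-S_{m-1}(z)$; $\phi^{-1}(z:1)=\{(x:y:u)\mid (x+y)^2-(2+z)u^2=0\}$ where $z$ is a root of $S_m(z)+S_{m-1}(z)$.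
   Context: The Chebyshev polynomials $S_j(\omega)$ are defined for all integers $j$ by $S_0=1$, $S_1=\omega$, $S_{j+1}=\omega S_j-S_{j-1}$. $S$ is the projective closure of the natural model of the canonical component of the $\mathrm{SL}_2(\mathbb C)$ character variety of the double twist link $J(3,2m+1)$; each fiber of $\phi$ is a conic in $\mathbb P^2(x:y:u)$. *)

theory Defs
  imports "HOL-Analysis.Analysis" "HOL-Computational_Algebra.Polynomial"
begin

fun chebS_pos :: "nat \<Rightarrow> complex poly" where
  "chebS_pos 0 = 1"
| "chebS_pos (Suc 0) = [:0, 1:]"
| "chebS_pos (Suc (Suc n)) = [:0, 1:] * chebS_pos (Suc n) - chebS_pos n"

text \<open>chebS_neg n = S_(-n), from the same recurrence run backwards:
  S_0 = 1, S_(-1) = X S_0 - S_1 = 0, S_(-(n+2)) = X S_(-(n+1)) - S_(-n).\<close>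
fun chebS_neg :: "nat \<Rightarrow> complex poly" where
  "chebS_neg 0 = 1"
| "chebS_neg (Suc 0) = 0"
| "chebS_neg (Suc (Suc n)) = [:0, 1:] * chebS_neg (Suc n) - chebS_neg n"

definition chebS :: "int \<Rightarrow> complex poly" where
  "chebS j = (if 0 \<le> j then chebS_pos (nat j) else chebS_neg (nat (- j)))"

definition S :: "int \<Rightarrow> complex \<Rightarrow> complex" where
  "S j \<omega> = poly (chebS j) \<omega>"

text \<open>The defining polynomial F dehomogenized at w = 1 (so T_j(z,1) = S_j(z)),
  for fixed (x,y,u), as a polynomial in z.\<close>
definition Fz :: "int \<Rightarrow> complex \<Rightarrow> complex \<Rightarrow> complex \<Rightarrow> complex poly" where
  "Fz m x y u =
     (let Z = [:0, 1:]; Sm = chebS m; Sm1 = chebS (m - 1) in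
      (([:x * y:] - smult (u\<^sup>2) Z)
        + ([:4 * u\<^sup>2 - x\<^sup>2 - y\<^sup>2:] + smult (x * y) Z - smult (u\<^sup>2) (Z ^ 2)) * Sm * Sm1) * Sm1
      - smult (u\<^sup>2) Sm)"

definition fiber_aff :: "int \<Rightarrow> complex \<Rightarrow> complex \<Rightarrow> complex \<Rightarrow> complex \<Rightarrow> complex" where
  "fiber_aff m z x y u = poly (Fz m x y u) z"

text \<open>Total degree of F in z (for w = 1); the projective closure in P^1(z:w) is obtained
  by homogenizing to this degree, so the fiber over (1:0) is given by the coefficient
  of z^D.\<close>
definition zdeg :: "int \<Rightarrow> nat" where
  "zdeg m = Max {degree (Fz m x y u) | x y u. True}"

definition fiber_inf :: "int \<Rightarrow> complex \<Rightarrow> complex \<Rightarrow> complex \<Rightarrow> complex" where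
  "fiber_inf m x y u = coeff (Fz m x y u) (zdeg m)"

definition degenerate :: "(complex \<Rightarrow> complex \<Rightarrow> complex \<Rightarrow> complex) \<Rightarrow> bool" where
  "degenerate Q \<longleftrightarrow> (\<exists>x y u. (x, y, u) \<noteq> (0, 0, 0) \<and> Q x y u = 0
      \<and> deriv (\<lambda>t. Q t y u) x = 0 \<and> deriv (\<lambda>t. Q x t u) y = 0 \<and> deriv (\<lambda>t. Q x y t) u = 0)"

definition same_conic :: "(complex \<Rightarrow> complex \<Rightarrow> complex \<Rightarrow> complex)
    \<Rightarrow> (complex \<Rightarrow> complex \<Rightarrow> complex \<Rightarrow> complex) \<Rightarrow> bool" where
  "same_conic Q R \<longleftrightarrow> (\<exists>c. c \<noteq> 0 \<and> (\<forall>x y u. Q x y u = c * R x y u))"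

end

(*
  Over (z:1) the fiber is the conic a' x^2 + b' x y + a' y^2 + c' u^2, whose coefficients are
  polynomials in z, a = S_m(z) and b = S_(m-1)(z); such a conic is degenerate iff
  c' (4 a'^2 - b'^2) = 0.  Cassini's identity a^2 + b^2 - z a b = 1 turns c' into -S_(3m)(z)
  (triplication formula) and 4 a'^2 - b'^2 into -b^2 (a + b)^2 (a - b)^2, which gives the four
  families, and the same identity factors each degenerate fiber.  Over (1:0) only the term
  -u^2 z^2 S_m S_(m-1)^2 reaches the top z-degree, as S_m and S_(m-1) are nonzero polynomials
  for m >= 1 or m <= -2.
*)
theory Submission
  imports Defs
begin

lemma chebS_of_nat: "chebS (int n) = chebS_pos n"
  by (simp add: chebS_def)

lemma chebS_uminus_of_nat: "chebS (- int n) = chebS_neg n"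
  by (cases n) (simp_all add: chebS_def del: of_nat_Suc)

lemma chebS_rec: "chebS (j + 1) = [:0, 1:] * chebS j - chebS (j - 1)"
proof (cases "j \<ge> 0")
  case True
  define n where "n = nat j"
  then have j: "j = int n" using True by simp
  show ?thesis
  proof (cases n)
    case 0
    then show ?thesis using j by (simp add: chebS_def)
  next
    case (Suc k)
    then have "j + 1 = int (Suc (Suc k))" "j - 1 = int k" using j by simp_all
    then show ?thesis using j Suc by (simp only: chebS_of_nat chebS_pos.simps)
  qed
next
  case False
  define n where "n = nat (- j - 1)"
  then have j: "j = - int (Suc n)" using False by simp
  then have "j + 1 = - int n" "j - 1 = - int (Suc (Suc n))" by simp_all
  then show ?thesis using j by (simp only: chebS_uminus_of_nat chebS_neg.simps) simp
qed

lemma S_rec: "S (j + 1) z = z * S j z - S (j - 1) z"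
  by (simp add: S_def chebS_rec)

lemma S_zero [simp]: "S 0 z = 1" and S_one [simp]: "S 1 z = z" and S_minus_one [simp]: "S (-1) z = 0"
  by (simp_all add: S_def chebS_def)

lemma int_recurrence_unique:
  fixes f g :: "int \<Rightarrow> 'a::comm_ring"
  assumes f: "\<And>j. f (j + 1) = c * f j - f (j - 1)"
    and g: "\<And>j. g (j + 1) = c * g j - g (j - 1)"
    and "f 0 = g 0" "f 1 = g 1"
  shows "f j = g j"
proof -
  have "f j = g j \<and> f (j + 1) = g (j + 1)"
  proof (induction j rule: int_induct[where k = 0])
    case base
    then show ?case using assms(3,4) by simp
  next
    case (step1 i)
    then show ?case using f[of "i + 1"] g[of "i + 1"] by simp
  next
    case (step2 i)
    have "f (i - 1) = c * f i - f (i + 1)" "g (i - 1) = c * g i - g (i + 1)"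
      using f[of i] g[of i] by (simp_all add: algebra_simps)
    then show ?case using step2 by simp
  qed
  then show ?thesis ..
qed

lemma S_add: "S (p + q) z = S p z * S q z - S (p - 1) z * S (q - 1) z"
proof (rule int_recurrence_unique[where c = z and j = q])
  show "S (p + (j + 1)) z = z * S (p + j) z - S (p + (j - 1)) z" for j
    using S_rec[of "p + j" z] by (simp add: add.assoc add_diff_eq)
  show "S p z * S (j + 1) z - S (p - 1) z * S (j + 1 - 1) z
      = z * (S p z * S j z - S (p - 1) z * S (j - 1) z) - (S p z * S (j - 1) z - S (p - 1) z * S (j - 1 - 1) z)" for j
  proof -
    have "S (j + 1) z = z * S j z - S (j - 1) z" "S (j - 1 - 1) z = z * S (j - 1) z - S j z"
      using S_rec[of j z] S_rec[of "j - 1" z] by simp_all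
    then show ?thesis by (simp only: add_diff_cancel_right') (simp add: algebra_simps)
  qed
  show "S (p + 1) z = S p z * S 1 z - S (p - 1) z * S (1 - 1) z"
    using S_rec[of p z] by simp
qed simp

lemma S_Cassini: "(S j z)\<^sup>2 + (S (j - 1) z)\<^sup>2 - z * S j z * S (j - 1) z = 1"
proof (induction j rule: int_induct[where k = 0])
  case base
  then show ?case by simp
next
  case (step1 i)
  have "S (i + 1) z = z * S i z - S (i - 1) z" by (rule S_rec)
  with step1.IH show ?case by (simp only: add_diff_cancel_right') algebra
next
  case (step2 i)
  have "S (i - 1 - 1) z = z * S (i - 1) z - S i z" using S_rec[of "i - 1" z] by simp
  with step2.IH show ?case by algebra
qed

lemma S_triple: "S (3 * m) z = (S m z)^3 - 3 * S m z * (S (m - 1) z)\<^sup>2 + z * (S (m - 1) z)^3"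
proof -
  have idx: "m + m = 2 * m" "m + (m - 1) = 2 * m - 1" "2 * m + m = 3 * m" "m - 1 - 1 = m - 2"
    by simp_all
  have "S (3 * m) z = S (2 * m) z * S m z - S (2 * m - 1) z * S (m - 1) z"
    using S_add[of "2 * m" m z] unfolding idx .
  also have "S (2 * m) z = S m z * S m z - S (m - 1) z * S (m - 1) z"
    using S_add[of m m z] unfolding idx .
  also have "S (2 * m - 1) z = S m z * S (m - 1) z - S (m - 1) z * S (m - 2) z"
    using S_add[of m "m - 1" z] unfolding idx .
  also have "S (m - 2) z = z * S (m - 1) z - S m z"
    using S_rec[of "m - 1" z] by simp
  finally show ?thesis by (simp add: algebra_simps power2_eq_square power3_eq_cube)
qed

lemma chebS_pos_degree_coeff: "degree (chebS_pos n) \<le> n \<and> coeff (chebS_pos n) n = 1"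
proof (induction n rule: chebS_pos.induct)
  case (3 n)
  have "degree ([:0, 1:] * chebS_pos (Suc n)) \<le> Suc (Suc n)"
    using 3(1) by (simp add: degree_pCons_le order.trans[OF degree_mult_le])
  moreover have "coeff (chebS_pos n) (Suc (Suc n)) = 0"
    using 3(2) by (intro coeff_eq_0) simp
  ultimately show ?case using 3 by (auto intro: degree_diff_le)
qed simp_all

lemma chebS_pos_nonzero: "chebS_pos n \<noteq> 0"
  using chebS_pos_degree_coeff[of n] by auto

lemma chebS_neg_Suc_Suc: "chebS_neg (Suc (Suc n)) = - chebS_pos n"
  by (induction n rule: chebS_pos.induct) (simp_all add: algebra_simps)

lemma chebS_nonzero:
  assumes "0 \<le> j \<or> j \<le> -2"
  shows "chebS j \<noteq> 0"
proof (cases "0 \<le> j")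
  case True
  then show ?thesis by (simp add: chebS_def chebS_pos_nonzero)
next
  case False
  then have "j = - int (Suc (Suc (nat (- j - 2))))" using assms by simp
  then show ?thesis
    by (metis chebS_uminus_of_nat chebS_neg_Suc_Suc chebS_pos_nonzero neg_equal_0_iff_equal)
qed

lemma degenerate_diagonal_conic_iff:
  fixes a b c d :: complex
  shows "degenerate (\<lambda>x y u. a * x\<^sup>2 + b * x * y + d * y\<^sup>2 + c * u\<^sup>2) \<longleftrightarrow> c * (4 * a * d - b\<^sup>2) = 0"
    (is "degenerate ?Q \<longleftrightarrow> _")
proof -
  have grad: "deriv (\<lambda>t. ?Q t y u) x = 2 * a * x + b * y"
    "deriv (\<lambda>t. ?Q x t u) y = b * x + 2 * d * y"
    "deriv (\<lambda>t. ?Q x y t) u = 2 * c * u" for x y u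
    by (rule DERIV_imp_deriv; auto intro!: derivative_eq_intros simp: power2_eq_square algebra_simps)+
  have euler: "?Q x y u = (x * (2 * a * x + b * y) + y * (b * x + 2 * d * y)) / 2 + u * (c * u)"
    for x y u
    by (simp add: field_simps power2_eq_square)
  have "degenerate ?Q \<longleftrightarrow> (\<exists>x y u. (x, y, u) \<noteq> (0, 0, 0) \<and> ?Q x y u = 0
      \<and> 2 * a * x + b * y = 0 \<and> b * x + 2 * d * y = 0 \<and> 2 * c * u = 0)"
    unfolding degenerate_def grad ..
  also have "\<dots> \<longleftrightarrow> (\<exists>x y u. (x, y, u) \<noteq> (0, 0, 0)
      \<and> 2 * a * x + b * y = 0 \<and> b * x + 2 * d * y = 0 \<and> c * u = 0)"
    by (intro ex_cong1) (auto simp: euler)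
  finally have deg: "degenerate ?Q \<longleftrightarrow> (\<exists>x y u. (x, y, u) \<noteq> (0, 0, 0)
      \<and> 2 * a * x + b * y = 0 \<and> b * x + 2 * d * y = 0 \<and> c * u = 0)" .
  show ?thesis
  proof
    assume "degenerate ?Q"
    then obtain x y u where nz: "(x, y, u) \<noteq> (0, 0, 0)"
      and ex: "2 * a * x + b * y = 0" and ey: "b * x + 2 * d * y = 0" and eu: "c * u = 0"
      unfolding deg by blast
    have "(4 * a * d - b\<^sup>2) * x = 2 * d * (2 * a * x + b * y) - b * (b * x + 2 * d * y)"
      "(4 * a * d - b\<^sup>2) * y = 2 * a * (b * x + 2 * d * y) - b * (2 * a * x + b * y)"
      by algebra+
    with ex ey eu nz show "c * (4 * a * d - b\<^sup>2) = 0" by auto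
  next
    assume h: "c * (4 * a * d - b\<^sup>2) = 0"
    consider "c = 0" | "a = 0" "b = 0" | "4 * a * d = b\<^sup>2" "a \<noteq> 0 \<or> b \<noteq> 0"
      using h by force
    then show "degenerate ?Q"
    proof cases
      case 1
      then show ?thesis unfolding deg by (intro exI[of _ 0] exI[of _ 1]) simp
    next
      case 2
      then show ?thesis unfolding deg by (intro exI[of _ 1] exI[of _ 0]) simp
    next
      case 3
      then show ?thesis unfolding deg
        by (intro exI[of _ b] exI[of _ "-2 * a"] exI[of _ 0]) (auto simp: algebra_simps power2_eq_square)
    qed
  qed
qed

lemma Fz_degree_coeff:
  assumes A: "chebS m \<noteq> 0" and B: "chebS (m - 1) \<noteq> 0"
  defines "D \<equiv> degree (chebS m) + 2 * degree (chebS (m - 1)) + 2"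
  shows "degree (Fz m x y u) \<le> D"
    and "coeff (Fz m x y u) D = - u\<^sup>2 * (lead_coeff (chebS m) * (lead_coeff (chebS (m - 1)))\<^sup>2)"
proof -
  define X :: "complex poly" where "X = [:0, 1:]"
  define A where "A = chebS m"
  define B where "B = chebS (m - 1)"
  define R where "R = ([:x * y:] - smult (u\<^sup>2) X) * B
    + ([:4 * u\<^sup>2 - x\<^sup>2 - y\<^sup>2:] + smult (x * y) X) * A * B * B - smult (u\<^sup>2) A"
  define T where "T = X ^ 2 * A * B * B"
  have F: "Fz m x y u = R + smult (- u\<^sup>2) T"
    unfolding Fz_def Let_def R_def T_def X_def A_def B_def by (simp add: algebra_simps)
  have "degree ([:x * y:] - smult (u\<^sup>2) X) \<le> 1"
    "degree ([:4 * u\<^sup>2 - x\<^sup>2 - y\<^sup>2:] + smult (x * y) X) \<le> 1"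
    by (auto intro!: degree_diff_le degree_add_le simp: X_def order.trans[OF degree_smult_le])
  then have "degree (([:x * y:] - smult (u\<^sup>2) X) * B) \<le> 1 + degree B"
    "degree (([:4 * u\<^sup>2 - x\<^sup>2 - y\<^sup>2:] + smult (x * y) X) * A * B * B)
       \<le> 1 + degree A + degree B + degree B"
    by (meson add_mono degree_mult_le order.trans order.refl)+
  then have dR: "degree R < D"
    unfolding R_def D_def A_def[symmetric] B_def[symmetric]
    by (intro degree_diff_less degree_add_less le_less_trans[OF degree_smult_le]) auto
  have dT: "degree T = D"
    using A B unfolding T_def D_def A_def B_def X_def by (simp add: degree_mult_eq degree_power_eq)
  have lT: "lead_coeff T = lead_coeff A * (lead_coeff B)\<^sup>2"
    unfolding T_def X_def by (simp add: lead_coeff_mult lead_coeff_power power2_eq_square)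
  show "degree (Fz m x y u) \<le> D"
    unfolding F using dR dT by (intro degree_add_le) (auto intro: order.trans[OF degree_smult_le])
  show "coeff (Fz m x y u) D = - u\<^sup>2 * (lead_coeff (chebS m) * (lead_coeff (chebS (m - 1)))\<^sup>2)"
    unfolding F using dR dT lT by (simp add: coeff_eq_0 A_def B_def)
qed

lemma fiber_inf_eq:
  assumes "chebS m \<noteq> 0" and "chebS (m - 1) \<noteq> 0"
  shows "fiber_inf m x y u = - (lead_coeff (chebS m) * (lead_coeff (chebS (m - 1)))\<^sup>2) * u\<^sup>2"
proof -
  define D where "D = degree (chebS m) + 2 * degree (chebS (m - 1)) + 2"
  note deg = Fz_degree_coeff[OF assms, folded D_def]
  have top: "degree (Fz m 0 0 1) = D"
    using deg[of 0 0 1] assms by (intro antisym le_degree) auto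
  have "zdeg m = D"
    unfolding zdeg_def
  proof (rule Max_eqI)
    show "finite {degree (Fz m x y u) | x y u. True}"
      by (rule finite_subset[of _ "{..D}"]) (auto simp: deg(1))
    show "d \<le> D" if "d \<in> {degree (Fz m x y u) | x y u. True}" for d
      using that deg(1) by auto
    show "D \<in> {degree (Fz m x y u) | x y u. True}"
      using top by force
  qed
  then show ?thesis
    unfolding fiber_inf_def using deg by simp
qed

text \<open>The fiber over (z:1) with S_m(z) and S_(m-1)(z) replaced by independent values a and b;
  the fiber computations below only use that a and b satisfy Cassini's identity.\<close>
definition fiber_form :: "complex \<Rightarrow> complex \<Rightarrow> complex \<Rightarrow> complex \<Rightarrow> complex \<Rightarrow> complex \<Rightarrow> complex" where
  "fiber_form a b z x y u =
     ((x * y - u\<^sup>2 * z) + (4 * u\<^sup>2 - x\<^sup>2 - y\<^sup>2 + x * y * z - u\<^sup>2 * z\<^sup>2) * a * b) * b - u\<^sup>2 * a"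

lemma fiber_aff_eq_fiber_form: "fiber_aff m z = fiber_form (S m z) (S (m - 1) z) z"
  by (intro ext) (simp add: fiber_aff_def Fz_def Let_def fiber_form_def S_def algebra_simps)

lemma fiber_form_diagonal:
  "fiber_form a b z = (\<lambda>x y u. (- (a * b\<^sup>2)) * x\<^sup>2 + (b + z * a * b\<^sup>2) * x * y
     + (- (a * b\<^sup>2)) * y\<^sup>2 + (a * b\<^sup>2 * (4 - z\<^sup>2) - z * b - a) * u\<^sup>2)"
  by (intro ext) (simp add: fiber_form_def algebra_simps power2_eq_square)

lemma degenerate_fiber_form_iff:
  assumes "a\<^sup>2 + b\<^sup>2 - z * a * b = 1"
  shows "degenerate (fiber_form a b z)
    \<longleftrightarrow> b = 0 \<or> a ^ 3 - 3 * a * b\<^sup>2 + z * b ^ 3 = 0 \<or> a - b = 0 \<or> a + b = 0"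
proof -
  define E where "E = a\<^sup>2 + b\<^sup>2 - z * a * b - 1"
  have E: "E = 0" using assms(1) by (simp add: E_def)
  define T where "T = a ^ 3 - 3 * a * b\<^sup>2 + z * b ^ 3"
  have "a * b\<^sup>2 * (4 - z\<^sup>2) - z * b - a = - T + (z * b + a) * E"
    unfolding E_def T_def by (simp add: algebra_simps power2_eq_square power3_eq_cube)
  then have c: "a * b\<^sup>2 * (4 - z\<^sup>2) - z * b - a = - T"
    using E by simp
  have "4 * (- (a * b\<^sup>2)) * (- (a * b\<^sup>2)) - (b + z * a * b\<^sup>2)\<^sup>2
      = - b\<^sup>2 * ((a + b)\<^sup>2 - E) * ((a - b)\<^sup>2 - E)"
    unfolding E_def by (simp add: algebra_simps power2_eq_square)
  then have disc: "4 * (- (a * b\<^sup>2)) * (- (a * b\<^sup>2)) - (b + z * a * b\<^sup>2)\<^sup>2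
      = - (b\<^sup>2 * (a + b)\<^sup>2 * (a - b)\<^sup>2)"
    using E by simp
  show ?thesis
    unfolding fiber_form_diagonal degenerate_diagonal_conic_iff c disc T_def[symmetric] by auto
qed

lemma fiber_form_same_conic_b_zero:
  assumes "a\<^sup>2 + b\<^sup>2 - z * a * b = 1" and "b = 0"
  shows "same_conic (fiber_form a b z) (\<lambda>x y u. u\<^sup>2)"
proof -
  have "a \<noteq> 0" using assms by auto
  then show ?thesis
    unfolding same_conic_def fiber_form_def using assms(2) by (intro exI[of _ "- a"]) simp
qed

lemma fiber_form_same_conic_triple:
  assumes "a\<^sup>2 + b\<^sup>2 - z * a * b = 1" and "a ^ 3 - 3 * a * b\<^sup>2 + z * b ^ 3 = 0"
  shows "same_conic (fiber_form a b z) (\<lambda>x y u. (x * a - y * b) * (y * a - x * b))"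
proof -
  define E where "E = a\<^sup>2 + b\<^sup>2 - z * a * b - 1"
  have E: "E = 0" using assms(1) by (simp add: E_def)
  have "b \<noteq> 0" using assms by auto
  moreover have "fiber_form a b z x y u = b * ((x * a - y * b) * (y * a - x * b)) - b * E * x * y
      + (- (a ^ 3 - 3 * a * b\<^sup>2 + z * b ^ 3) + (z * b + a) * E) * u\<^sup>2" for x y u
    unfolding fiber_form_def E_def by (simp add: algebra_simps power2_eq_square power3_eq_cube)
  ultimately show ?thesis
    unfolding same_conic_def E assms(2) by auto
qed

lemma fiber_form_same_conic_diff:
  assumes "a\<^sup>2 + b\<^sup>2 - z * a * b = 1" and "a - b = 0"
  shows "same_conic (fiber_form a b z) (\<lambda>x y u. (x - y)\<^sup>2 - (2 - z) * u\<^sup>2)"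
proof -
  define E where "E = a\<^sup>2 + b\<^sup>2 - z * a * b - 1"
  have E: "E = 0" using assms(1) by (simp add: E_def)
  have b: "b = a" using assms(2) by simp
  have "a \<noteq> 0" using assms(1) unfolding b by auto
  moreover have "fiber_form a b z x y u
      = - (a ^ 3) * ((x - y)\<^sup>2 - (2 - z) * u\<^sup>2) + E * (a * (1 + z) * u\<^sup>2 - a * x * y)" for x y u
    unfolding fiber_form_def E_def b by (simp add: algebra_simps power2_eq_square power3_eq_cube)
  ultimately show ?thesis
    unfolding same_conic_def E by (intro exI[of _ "- (a ^ 3)"]) simp
qed

lemma fiber_form_same_conic_sum:
  assumes "a\<^sup>2 + b\<^sup>2 - z * a * b = 1" and "a + b = 0"
  shows "same_conic (fiber_form a b z) (\<lambda>x y u. (x + y)\<^sup>2 - (2 + z) * u\<^sup>2)"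
proof -
  define E where "E = a\<^sup>2 + b\<^sup>2 - z * a * b - 1"
  have E: "E = 0" using assms(1) by (simp add: E_def)
  have b: "b = - a" using assms(2) by (simp add: eq_neg_iff_add_eq_0 add.commute)
  have "a \<noteq> 0" using assms(1) unfolding b by auto
  moreover have "fiber_form a b z x y u
      = - (a ^ 3) * ((x + y)\<^sup>2 - (2 + z) * u\<^sup>2) + E * (a * x * y - a * (z - 1) * u\<^sup>2)" for x y u
    unfolding fiber_form_def E_def b by (simp add: algebra_simps power2_eq_square power3_eq_cube)
  ultimately show ?thesis
    unfolding same_conic_def E by (intro exI[of _ "- (a ^ 3)"]) simp
qed

theorem proposition7p7:
  fixes m :: int
  assumes "m \<ge> 1 \<or> m \<le> -2"
  shows "degenerate (fiber_inf m)
    \<and> (\<forall>z. degenerate (fiber_aff m z) \<longleftrightarrow>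
          (S (m - 1) z = 0 \<or> S (3 * m) z = 0 \<or> S m z - S (m - 1) z = 0 \<or> S m z + S (m - 1) z = 0))
    \<and> same_conic (fiber_inf m) (\<lambda>x y u. u\<^sup>2)
    \<and> (\<forall>z. S (m - 1) z = 0 \<longrightarrow> same_conic (fiber_aff m z) (\<lambda>x y u. u\<^sup>2))
    \<and> (\<forall>z. S (3 * m) z = 0 \<longrightarrow> same_conic (fiber_aff m z)
          (\<lambda>x y u. (x * S m z - y * S (m - 1) z) * (y * S m z - x * S (m - 1) z)))
    \<and> (\<forall>z. S m z - S (m - 1) z = 0 \<longrightarrow> same_conic (fiber_aff m z)
          (\<lambda>x y u. (x - y)\<^sup>2 - (2 - z) * u\<^sup>2))
    \<and> (\<forall>z. S m z + S (m - 1) z = 0 \<longrightarrow> same_conic (fiber_aff m z)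
          (\<lambda>x y u. (x + y)\<^sup>2 - (2 + z) * u\<^sup>2))"
proof -
  have cheb: "chebS m \<noteq> 0" "chebS (m - 1) \<noteq> 0"
    using assms by (auto intro!: chebS_nonzero)
  define c where "c = - (lead_coeff (chebS m) * (lead_coeff (chebS (m - 1)))\<^sup>2)"
  have inf: "fiber_inf m = (\<lambda>x y u. c * u\<^sup>2)" and "c \<noteq> 0"
    using fiber_inf_eq[OF cheb] cheb by (auto simp: c_def fun_eq_iff)
  have "degenerate (\<lambda>x y u. c * u\<^sup>2)"
    using degenerate_diagonal_conic_iff[of 0 0 0 c] by simp
  moreover have "same_conic (\<lambda>x y u. c * u\<^sup>2) (\<lambda>x y u. u\<^sup>2)"
    unfolding same_conic_def using \<open>c \<noteq> 0\<close> by blast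
  ultimately show ?thesis
    unfolding inf fiber_aff_eq_fiber_form S_triple
    using degenerate_fiber_form_iff[OF S_Cassini] fiber_form_same_conic_b_zero[OF S_Cassini]
      fiber_form_same_conic_triple[OF S_Cassini] fiber_form_same_conic_diff[OF S_Cassini]
      fiber_form_same_conic_sum[OF S_Cassini]
    by blast
qed

end
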